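(* Let $Q$ be a diassociative loop. Then the assignment $\sigma(L_x)=R_x$, $\sigma(L_x^{-1})=R_x^{-1}$, $\sigma(R_x)=M_x^{-1}$, $\sigma(R_x^{-1})=M_x$ (for $x\in Q$, where $M_x=R_xL_x$) defines a well-defined mapping $\sigma:\{L_x,R_x,L_x^{-1},R_x^{-1}:x\in Q\}\to\mathrm{Mlt}(Q)$ if and only if $x^3=1$ for every $x\in\mathrm{Com}(Q)$.
   Context: A loop is a magma with identity $1$ in which the left translations $L_x(y)=xy$ and right translations $R_x(y)=yx$ are bijections; it is diassociative if any two elements generate a subgroup. $\mathrm{Mlt}(Q)$ is the permutation group generated by all $L_x,R_x$. The commutant is $\mathrm{Com}(Q)=\{x\in Q: xy=yx\text{ for all }y\in Q\}$. Well-definedness means that whenever two of the permutations $L_x,R_x,L_x^{-1},R_x^{-1},L_y,\dots$ coincide, their prescribed images coincide. *)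

theory Defs
  imports Main
begin

definition is_loop :: "('a \<Rightarrow> 'a \<Rightarrow> 'a) \<Rightarrow> 'a \<Rightarrow> bool" where
  "is_loop mult e \<longleftrightarrow> (\<forall>x. mult e x = x \<and> mult x e = x)
     \<and> (\<forall>x. bij (mult x)) \<and> (\<forall>x. bij (\<lambda>y. mult y x))"

definition Lt :: "('a \<Rightarrow> 'a \<Rightarrow> 'a) \<Rightarrow> 'a \<Rightarrow> 'a \<Rightarrow> 'a" where
  "Lt mult x = (\<lambda>y. mult x y)"

definition Rt :: "('a \<Rightarrow> 'a \<Rightarrow> 'a) \<Rightarrow> 'a \<Rightarrow> 'a \<Rightarrow> 'a" where
  "Rt mult x = (\<lambda>y. mult y x)"

text \<open>M_x = R_x L_x (composition R_x after L_x; in a diassociative loop this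
  coincides with L_x after R_x).\<close>
definition Mt :: "('a \<Rightarrow> 'a \<Rightarrow> 'a) \<Rightarrow> 'a \<Rightarrow> 'a \<Rightarrow> 'a" where
  "Mt mult x = Rt mult x \<circ> Lt mult x"

inductive_set gen2 :: "('a \<Rightarrow> 'a \<Rightarrow> 'a) \<Rightarrow> 'a \<Rightarrow> 'a \<Rightarrow> 'a \<Rightarrow> 'a set"
  for mult e x y where
  g_e: "e \<in> gen2 mult e x y"
| g_x: "x \<in> gen2 mult e x y"
| g_y: "y \<in> gen2 mult e x y"
| g_mult: "a \<in> gen2 mult e x y \<Longrightarrow> b \<in> gen2 mult e x y \<Longrightarrow> mult a b \<in> gen2 mult e x y"
| g_ldiv: "a \<in> gen2 mult e x y \<Longrightarrow> b \<in> gen2 mult e x y \<Longrightarrow> inv (Lt mult a) b \<in> gen2 mult e x y"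
| g_rdiv: "a \<in> gen2 mult e x y \<Longrightarrow> b \<in> gen2 mult e x y \<Longrightarrow> inv (Rt mult b) a \<in> gen2 mult e x y"

definition diassociative :: "('a \<Rightarrow> 'a \<Rightarrow> 'a) \<Rightarrow> 'a \<Rightarrow> bool" where
  "diassociative mult e \<longleftrightarrow> (\<forall>x y. \<forall>a\<in>gen2 mult e x y. \<forall>b\<in>gen2 mult e x y. \<forall>c\<in>gen2 mult e x y.
      mult (mult a b) c = mult a (mult b c))"

definition Com :: "('a \<Rightarrow> 'a \<Rightarrow> 'a) \<Rightarrow> 'a set" where
  "Com mult = {x. \<forall>y. mult x y = mult y x}"

datatype tkind = KL | KLinv | KR | KRinv

fun tperm :: "('a \<Rightarrow> 'a \<Rightarrow> 'a) \<Rightarrow> tkind \<Rightarrow> 'a \<Rightarrow> 'a \<Rightarrow> 'a" where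
  "tperm mult KL x = Lt mult x"
| "tperm mult KLinv x = inv (Lt mult x)"
| "tperm mult KR x = Rt mult x"
| "tperm mult KRinv x = inv (Rt mult x)"

fun sigma_img :: "('a \<Rightarrow> 'a \<Rightarrow> 'a) \<Rightarrow> tkind \<Rightarrow> 'a \<Rightarrow> 'a \<Rightarrow> 'a" where
  "sigma_img mult KL x = Rt mult x"
| "sigma_img mult KLinv x = inv (Rt mult x)"
| "sigma_img mult KR x = inv (Mt mult x)"
| "sigma_img mult KRinv x = Mt mult x"

definition sigma_well_defined :: "('a \<Rightarrow> 'a \<Rightarrow> 'a) \<Rightarrow> bool" where
  "sigma_well_defined mult \<longleftrightarrow> (\<forall>k1 x1 k2 x2.
     tperm mult k1 x1 = tperm mult k2 x2 \<longrightarrow> sigma_img mult k1 x1 = sigma_img mult k2 x2)"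

end

theory Submission
  imports Defs
begin

text \<open>In a diassociative loop every x has a two-sided inverse x', and
  L_x^-1 = L_x', R_x^-1 = R_x', M_x^-1 = M_x'. Hence each generating symbol prescribes either
  L_u \<mapsto> R_u or R_u \<mapsto> M_u^-1 for some u. Left translations by distinct elements differ, as
  do right translations, and L_u = R_v exactly when u = v is central. So \<sigma> is well defined
  iff R_u = M_u^-1, i.e. u(zu)u = z for all z, for every central u; computing in the group
  generated by u and z, u(zu)u = u^3 z.\<close>

context
  fixes mult :: "'a \<Rightarrow> 'a \<Rightarrow> 'a" (infixl "\<cdot>" 70) and e :: 'a
  assumes loop: "is_loop mult e"
begin

lemma loop_left_unit [simp]: "e \<cdot> x = x"
  and loop_right_unit [simp]: "x \<cdot> e = x"
  using loop by (auto simp: is_loop_def)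

lemma bij_Lt: "bij (Lt mult x)"
  and bij_Rt: "bij (Rt mult x)"
  using loop by (auto simp: is_loop_def Lt_def Rt_def)

lemma bij_Mt: "bij (Mt mult x)"
  unfolding Mt_def using bij_Lt bij_Rt by (rule bij_comp)

lemma loop_left_cancel [simp]: "x \<cdot> y = x \<cdot> z \<longleftrightarrow> y = z"
  using bij_is_inj[OF bij_Lt] by (auto simp: Lt_def dest: injD)

lemma Lt_inject: "Lt mult x = Lt mult y \<Longrightarrow> x = y"
  by (drule fun_cong[where x = e]) (simp add: Lt_def)

lemma Rt_inject: "Rt mult x = Rt mult y \<Longrightarrow> x = y"
  by (drule fun_cong[where x = e]) (simp add: Rt_def)

lemma Lt_eq_Rt_iff: "Lt mult x = Rt mult y \<longleftrightarrow> x = y \<and> x \<in> Com mult"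
proof
  assume LR: "Lt mult x = Rt mult y"
  have "x = y"
    using fun_cong[OF LR, of e] by (simp add: Lt_def Rt_def)
  with LR show "x = y \<and> x \<in> Com mult"
    by (simp add: Com_def Lt_def Rt_def fun_eq_iff)
qed (auto simp: Com_def Lt_def Rt_def)

definition loop_inv :: "'a \<Rightarrow> 'a" where
  "loop_inv x = inv (Lt mult x) e"

lemma mult_loop_inv [simp]: "x \<cdot> loop_inv x = e"
  using surj_f_inv_f[OF bij_is_surj[OF bij_Lt]] by (simp add: loop_inv_def Lt_def)

lemma loop_inv_in_gen2: "loop_inv x \<in> gen2 mult e x y"
  unfolding loop_inv_def by (intro gen2.intros)

context
  assumes diassoc: "diassociative mult e"
begin

lemma assoc_gen2:
  assumes "a \<in> gen2 mult e x y" "b \<in> gen2 mult e x y" "c \<in> gen2 mult e x y"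
  shows "(a \<cdot> b) \<cdot> c = a \<cdot> (b \<cdot> c)"
  using diassoc assms unfolding diassociative_def by blast

lemma loop_inv_mult [simp]: "loop_inv x \<cdot> x = e"
proof -
  have "x \<cdot> (loop_inv x \<cdot> x) = (x \<cdot> loop_inv x) \<cdot> x"
    by (intro assoc_gen2[where x = x and y = x, symmetric] gen2.intros loop_inv_in_gen2)
  then show ?thesis
    by (metis loop_left_cancel loop_right_unit mult_loop_inv loop_left_unit)
qed

lemma loop_inv_loop_inv [simp]: "loop_inv (loop_inv x) = x"
proof -
  have "loop_inv x \<cdot> loop_inv (loop_inv x) = loop_inv x \<cdot> x"
    by simp
  then show ?thesis
    by (simp only: loop_left_cancel)
qed

lemma Lt_comp_loop_inv: "Lt mult x \<circ> Lt mult (loop_inv x) = id"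
proof
  fix z
  have "x \<cdot> (loop_inv x \<cdot> z) = (x \<cdot> loop_inv x) \<cdot> z"
    by (intro assoc_gen2[where x = x and y = z, symmetric] gen2.intros loop_inv_in_gen2)
  then show "(Lt mult x \<circ> Lt mult (loop_inv x)) z = id z"
    by (simp add: Lt_def)
qed

lemma Rt_comp_loop_inv: "Rt mult x \<circ> Rt mult (loop_inv x) = id"
proof
  fix z
  have "(z \<cdot> loop_inv x) \<cdot> x = z \<cdot> (loop_inv x \<cdot> x)"
    by (intro assoc_gen2[where x = x and y = z] gen2.intros loop_inv_in_gen2)
  then show "(Rt mult x \<circ> Rt mult (loop_inv x)) z = id z"
    by (simp add: Rt_def)
qed

lemma Mt_comp_loop_inv: "Mt mult x \<circ> Mt mult (loop_inv x) = id"
proof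
  fix z
  have "x \<cdot> ((loop_inv x \<cdot> z) \<cdot> loop_inv x) = (x \<cdot> (loop_inv x \<cdot> z)) \<cdot> loop_inv x"
    by (intro assoc_gen2[where x = x and y = z, symmetric] gen2.intros loop_inv_in_gen2)
  also have "x \<cdot> (loop_inv x \<cdot> z) = z"
    using Lt_comp_loop_inv by (simp add: Lt_def fun_eq_iff)
  also have "(z \<cdot> loop_inv x) \<cdot> x = z"
    using Rt_comp_loop_inv by (simp add: Rt_def fun_eq_iff)
  finally show "(Mt mult x \<circ> Mt mult (loop_inv x)) z = id z"
    by (simp add: Mt_def Lt_def Rt_def)
qed

lemma inv_eq_at_loop_inv:
  assumes "\<And>x. T x \<circ> T (loop_inv x) = id"
  shows "inv (T x) = T (loop_inv x)"
  using inv_unique_comp[OF assms, of x] assms[of "loop_inv x"] by simp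

lemmas inv_Lt = inv_eq_at_loop_inv[of "Lt mult", OF Lt_comp_loop_inv]
  and inv_Rt = inv_eq_at_loop_inv[of "Rt mult", OF Rt_comp_loop_inv]
  and inv_Mt = inv_eq_at_loop_inv[of "Mt mult", OF Mt_comp_loop_inv]

lemma tperm_sigma_img_cases:
  obtains (left) u where "tperm mult k x = Lt mult u" "sigma_img mult k x = Rt mult u"
  | (right) u where "tperm mult k x = Rt mult u" "sigma_img mult k x = inv (Mt mult u)"
proof (cases k)
  case KRinv
  then show ?thesis
    using right[of "loop_inv x"] by (simp add: inv_Rt inv_Mt)
qed (simp_all add: left right inv_Lt inv_Rt)

lemma central_Mt_Rt:
  assumes "u \<in> Com mult"
  shows "Mt mult u (Rt mult u z) = ((u \<cdot> u) \<cdot> u) \<cdot> z"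
proof -
  have comm: "z \<cdot> u = u \<cdot> z"
    using assms by (simp add: Com_def)
  have mem: "u \<in> gen2 mult e u z" "z \<in> gen2 mult e u z" "u \<cdot> u \<in> gen2 mult e u z"
    by (intro gen2.intros)+
  have "(u \<cdot> (z \<cdot> u)) \<cdot> u = (u \<cdot> (u \<cdot> z)) \<cdot> u"
    by (simp only: comm)
  also have "\<dots> = ((u \<cdot> u) \<cdot> z) \<cdot> u"
    by (simp only: assoc_gen2[OF mem(1,1,2)])
  also have "\<dots> = (u \<cdot> u) \<cdot> (z \<cdot> u)"
    by (rule assoc_gen2[OF mem(3,2,1)])
  also have "\<dots> = (u \<cdot> u) \<cdot> (u \<cdot> z)"
    by (simp only: comm)
  also have "\<dots> = ((u \<cdot> u) \<cdot> u) \<cdot> z"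
    by (rule assoc_gen2[OF mem(3,1,2), symmetric])
  finally show ?thesis
    by (simp add: Mt_def Lt_def Rt_def)
qed

lemma central_Rt_eq_inv_Mt_iff:
  assumes "u \<in> Com mult"
  shows "Rt mult u = inv (Mt mult u) \<longleftrightarrow> (u \<cdot> u) \<cdot> u = e"
proof -
  have "Rt mult u = inv (Mt mult u) \<longleftrightarrow> (\<forall>z. ((u \<cdot> u) \<cdot> u) \<cdot> z = z)"
    by (simp add: fun_eq_iff bij_inv_eq_iff[OF bij_Mt] central_Mt_Rt[OF assms])
  also have "\<dots> \<longleftrightarrow> (u \<cdot> u) \<cdot> u = e"
    by (metis loop_left_unit loop_right_unit)
  finally show ?thesis .
qed

lemma sigma_well_defined_iff_central:
  "sigma_well_defined mult \<longleftrightarrow> (\<forall>u\<in>Com mult. Rt mult u = inv (Mt mult u))"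
proof
  assume wd: "sigma_well_defined mult"
  show "\<forall>u\<in>Com mult. Rt mult u = inv (Mt mult u)"
  proof
    fix u
    assume "u \<in> Com mult"
    then have "tperm mult KL u = tperm mult KR u"
      by (simp add: Lt_eq_Rt_iff)
    with wd show "Rt mult u = inv (Mt mult u)"
      unfolding sigma_well_defined_def by fastforce
  qed
next
  assume central: "\<forall>u\<in>Com mult. Rt mult u = inv (Mt mult u)"
  show "sigma_well_defined mult"
    unfolding sigma_well_defined_def
  proof (intro allI impI)
    fix k1 x1 k2 x2
    assume same_perm: "tperm mult k1 x1 = tperm mult k2 x2"
    have mixed: "Rt mult u = inv (Mt mult v)" if "Lt mult u = Rt mult v" for u v
      using that central by (auto simp: Lt_eq_Rt_iff)
    from same_perm show "sigma_img mult k1 x1 = sigma_img mult k2 x2"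
      by (cases k1 x1 rule: tperm_sigma_img_cases; cases k2 x2 rule: tperm_sigma_img_cases)
        (auto dest: Lt_inject Rt_inject mixed mixed[OF sym])
  qed
qed

end

end

theorem lemma6p1:
  fixes mult :: "'a \<Rightarrow> 'a \<Rightarrow> 'a" and e :: 'a
  assumes "is_loop mult e" and "diassociative mult e"
  shows "sigma_well_defined mult \<longleftrightarrow> (\<forall>x\<in>Com mult. mult (mult x x) x = e)"
  using sigma_well_defined_iff_central[OF assms] central_Rt_eq_inv_Mt_iff[OF assms]
  by simp

end
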